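(* Let $p \geq 1$, let $\boldsymbol \Omega$ be a $p\times p$ positive definite matrix and $\boldsymbol \Psi$ a $p\times p$ non-diagonal positive definite matrix with unit diagonal. Let $\boldsymbol \beta = \boldsymbol s \circ \boldsymbol z$ where $\boldsymbol z \sim \text{normal}(\boldsymbol 0, \boldsymbol \Omega)$ and $\boldsymbol s \sim \text{normal}(\boldsymbol 0, \boldsymbol \Psi)$ are independent (the SPN prior). Then for every $j \in \{1,\dots,p\}$ the marginal prior density of $\beta_j$ at $0$, $$p(\beta_j = 0 \mid \boldsymbol \Psi, \boldsymbol \Omega) = \int_{\mathbb{R}^{p-1}} \int_{\mathbb{R}^p} \Big(\prod_{i=1}^p \frac{1}{|s_i|}\Big)\phi_{\boldsymbol \Omega}(\boldsymbol b/\boldsymbol s)\,\phi_{\boldsymbol \Psi}(\boldsymbol s)\, d\boldsymbol s\, d\boldsymbol b_{-j}\Big|_{b_j = 0},$$ equals $+\infty$.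
   Context: $\phi_{\boldsymbol A}$ denotes the $\text{normal}(\boldsymbol 0,\boldsymbol A)$ density, $\boldsymbol b/\boldsymbol s$ is elementwise division, $\circ$ is the elementwise product, and $\boldsymbol b_{-j}$ denotes $\boldsymbol b$ with its $j$-th coordinate removed (the outer integral is over $\boldsymbol b_{-j}$ with $b_j$ fixed at $0$). *)

theory Defs
  imports "HOL-Analysis.Analysis"
begin

definition pos_def_mat :: "real^'n^'n \<Rightarrow> bool" where
  "pos_def_mat A \<longleftrightarrow> transpose A = A \<and> (\<forall>x. x \<noteq> 0 \<longrightarrow> x \<bullet> (A *v x) > 0)"

definition mvn_density :: "real^'n^'n \<Rightarrow> real^'n \<Rightarrow> real" where
  "mvn_density A x =
     exp (- (x \<bullet> (matrix_inv A *v x)) / 2) / sqrt ((2 * pi) ^ CARD('n) * det A)"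

end

theory Submission
  imports Defs
begin

text \<open>For fixed \<open>b\<close> with \<open>b\<^sub>i \<in> [1,2]\<close> (\<open>i \<noteq> j\<close>), the argument \<open>b/s\<close> of \<open>\<phi>\<^sub>\<Omega>\<close> has \<open>j\<close>-th entry \<open>0\<close>
  whatever \<open>s\<^sub>j\<close> is, so on the boxes where \<open>s\<^sub>j \<in> (2\<^sup>-\<^sup>k\<^sup>-\<^sup>1, 2\<^sup>-\<^sup>k)\<close> and \<open>s\<^sub>i \<in> (1,2)\<close> otherwise,
  both normal densities stay bounded below while \<open>1/|s\<^sub>j|\<close> exceeds \<open>2\<^sup>k\<close>. Each box thus contributes
  the same positive amount to the inner integral, which is therefore infinite; integrating
  \<open>\<infinity>\<close> over the set \<open>[1,2]\<^sup>p\<^sup>-\<^sup>1\<close> of positive measure gives \<open>\<infinity>\<close>.\<close>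

lemma det_nonzero_if_pos_quadratic_form:
  fixes M :: "real^'n^'n"
  assumes "\<And>x. x \<noteq> 0 \<Longrightarrow> x \<bullet> (M *v x) > 0"
  shows "det M \<noteq> 0"
proof -
  have "inj ((*v) M)"
  proof (rule injI)
    fix x y assume "M *v x = M *v y"
    then have "M *v (x - y) = 0" by (simp add: matrix_vector_mult_diff_distrib)
    then show "x = y" using assms[of "x - y"] by (cases "x - y = 0") auto
  qed
  then show ?thesis using det_nz_iff_inj[of "(*v) M"] by (simp add: matrix_of_matrix_vector_mul)
qed

text \<open>Along the segment from \<open>mat 1\<close> to \<open>M\<close> every matrix has a positive quadratic form, so the
  determinant cannot vanish and keeps the sign it has at \<open>mat 1\<close>.\<close>

lemma pos_def_mat_det_pos:
  fixes M :: "real^'n^'n"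
  assumes "pos_def_mat M"
  shows "det M > 0"
proof (rule ccontr)
  assume "\<not> det M > 0"
  define g where "g t = det ((1 - t) *\<^sub>R mat 1 + t *\<^sub>R M)" for t :: real
  have "continuous_on {0..1} g"
    unfolding g_def det_def by (intro continuous_intros)
  moreover have "g 1 \<le> 0" "g 0 = 1" using \<open>\<not> det M > 0\<close> by (simp_all add: g_def)
  ultimately obtain t where t: "0 \<le> t" "t \<le> 1" "g t = 0"
    using IVT2'[of g 1 0 0] by auto
  have "det ((1 - t) *\<^sub>R mat 1 + t *\<^sub>R M) \<noteq> 0"
  proof (rule det_nonzero_if_pos_quadratic_form)
    fix x :: "real^'n" assume "x \<noteq> 0"
    then have "x \<bullet> x > 0" "x \<bullet> (M *v x) > 0" using assms by (auto simp: pos_def_mat_def)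
    moreover have "x \<bullet> (((1 - t) *\<^sub>R mat 1 + t *\<^sub>R M) *v x)
        = (1 - t) * (x \<bullet> x) + t * (x \<bullet> (M *v x))"
      by (simp add: matrix_vector_mult_add_rdistrib inner_add_right
          scaleR_matrix_vector_assoc[symmetric])
    ultimately show "x \<bullet> (((1 - t) *\<^sub>R mat 1 + t *\<^sub>R M) *v x) > 0"
      using t by (smt (verit) mult_nonneg_nonneg mult_pos_pos)
  qed
  then show False using t by (simp add: g_def)
qed

lemma mvn_density_bounded_below_on_ball:
  fixes A :: "real^'n^'n"
  assumes "det A > 0"
  obtains c where "c > 0" "\<And>x. norm x \<le> R \<Longrightarrow> c \<le> mvn_density A x"
proof -
  obtain K where K: "K > 0" "\<And>x. norm (matrix_inv A *v x) \<le> norm x * K"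
    using bounded_linear.pos_bounded[OF matrix_vector_mul_bounded_linear] by blast
  define D where "D = sqrt ((2 * pi) ^ CARD('n) * det A)"
  have "D > 0" unfolding D_def using assms by simp
  have "exp (- (K * R\<^sup>2) / 2) / D \<le> mvn_density A x" if "norm x \<le> R" for x
  proof -
    have "x \<bullet> (matrix_inv A *v x) \<le> norm x * norm (matrix_inv A *v x)"
      by (rule order_trans[OF _ Cauchy_Schwarz_ineq2]) simp
    also have "\<dots> \<le> norm x * (norm x * K)" by (intro mult_left_mono K) auto
    also have "\<dots> = K * (norm x)\<^sup>2" by (simp add: power2_eq_square)
    also have "\<dots> \<le> K * R\<^sup>2" using that K(1) by (intro mult_left_mono power_mono) auto
    finally show ?thesis
      unfolding mvn_density_def D_def[symmetric] using \<open>D > 0\<close> by (simp add: divide_right_mono)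
  qed
  moreover have "exp (- (K * R\<^sup>2) / 2) / D > 0" using \<open>D > 0\<close> by simp
  ultimately show thesis using that by blast
qed

lemma norm_le_card_mult_if_components_le:
  fixes x :: "real^'n" and c :: real
  assumes "\<And>i. \<bar>x $ i\<bar> \<le> c"
  shows "norm x \<le> CARD('n) * c"
proof -
  have "norm x \<le> (\<Sum>i\<in>UNIV. \<bar>x $ i\<bar>)" by (rule norm_le_l1_cart)
  also have "\<dots> \<le> (\<Sum>i\<in>(UNIV::'n set). c)" by (intro sum_mono assms)
  finally show ?thesis by simp
qed

lemma emeasure_lborel_box_cart:
  fixes l u :: "real^'n"
  assumes "\<And>i. l $ i \<le> u $ i"
  shows "emeasure lborel (box l u) = ennreal (\<Prod>i\<in>UNIV. u $ i - l $ i)"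
proof -
  have "l \<in> cbox l u" using assms by (simp add: mem_box_cart)
  then have "measure lborel (cbox l u) = (\<Prod>i\<in>UNIV. u $ i - l $ i)"
    using content_cbox_cart[of l u] by blast
  then have "measure lborel (box l u) = (\<Prod>i\<in>UNIV. u $ i - l $ i)"
    by (simp add: measure_lborel_box_eq measure_lborel_cbox_eq)
  then show ?thesis using emeasure_lborel_box_finite[of l u]
    by (simp add: emeasure_eq_ennreal_measure)
qed

lemma nn_integral_eq_top_if_bounded_below_on_disjoint_family:
  fixes f :: "'a \<Rightarrow> ennreal" and c :: "nat \<Rightarrow> ennreal" and \<epsilon> :: real
  assumes B: "disjoint_family B" "\<And>k. B k \<in> sets M"
    and f: "\<And>k x. x \<in> B k \<Longrightarrow> c k \<le> f x"
    and \<epsilon>: "\<epsilon> > 0" "\<And>k. ennreal \<epsilon> \<le> c k * emeasure M (B k)"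
  shows "(\<integral>\<^sup>+x. f x \<partial>M) = \<infinity>"
proof -
  have step_le_f: "(\<Sum>k. c k * indicator (B k) x) \<le> f x" for x
  proof (cases "\<exists>m. x \<in> B m")
    case True
    then obtain m where "x \<in> B m" by blast
    then have "\<And>k. k \<notin> {m} \<Longrightarrow> c k * indicator (B k) x = 0"
      using B(1) by (auto simp: disjoint_family_on_def split: split_indicator)
    then have "(\<Sum>k. c k * indicator (B k) x) = c m"
      using \<open>x \<in> B m\<close> by (subst suminf_finite[of "{m}"]) auto
    then show ?thesis using f[OF \<open>x \<in> B m\<close>] by simp
  qed simp
  have "\<not> summable (\<lambda>_::nat. \<epsilon>)"
  proof
    assume "summable (\<lambda>_::nat. \<epsilon>)"
    then have "(\<lambda>_::nat. \<epsilon>) \<longlonglongrightarrow> 0" by (rule summable_LIMSEQ_zero)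
    then show False using \<epsilon>(1) by (simp add: LIMSEQ_const_iff)
  qed
  then have "\<infinity> = (\<Sum>k. ennreal \<epsilon>)"
    unfolding infinity_ennreal_def using \<epsilon>(1)
    by (intro summable_iff_suminf_neq_top[symmetric]) auto
  also have "\<dots> \<le> (\<Sum>k. c k * emeasure M (B k))"
    using \<epsilon>(2) by (intro suminf_le) auto
  also have "\<dots> = (\<integral>\<^sup>+x. (\<Sum>k. c k * indicator (B k) x) \<partial>M)"
    using B(2) by (subst nn_integral_suminf) (auto simp: nn_integral_cmult_indicator)
  also have "\<dots> \<le> (\<integral>\<^sup>+x. f x \<partial>M)"
    by (intro nn_integral_mono step_le_f)
  finally show ?thesis by (simp add: top_unique)
qed

lemma nn_integral_eq_top_if_top_on_set:
  fixes f :: "'a \<Rightarrow> ennreal"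
  assumes "S \<in> sets M" "emeasure M S \<noteq> 0" "\<And>x. x \<in> S \<Longrightarrow> f x = \<infinity>"
  shows "(\<integral>\<^sup>+x. f x \<partial>M) = \<infinity>"
proof -
  have "\<infinity> = (\<integral>\<^sup>+x. \<infinity> * indicator S x \<partial>M)"
    using assms(1,2) by (subst nn_integral_cmult_indicator) (simp_all add: ennreal_top_mult)
  also have "\<dots> \<le> (\<integral>\<^sup>+x. f x \<partial>M)"
    using assms(3) by (intro nn_integral_mono) (auto split: split_indicator)
  finally show ?thesis by (simp add: top_unique)
qed

definition dyadic_box :: "'n \<Rightarrow> nat \<Rightarrow> (real^'n) set" where
  "dyadic_box j k =
     box (\<chi> i. if i = j then (1/2)^Suc k else 1) (\<chi> i. if i = j then (1/2)^k else 2)"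

lemma mem_dyadic_box:
  "s \<in> dyadic_box j k \<longleftrightarrow>
     (1/2)^Suc k < s $ j \<and> s $ j < (1/2)^k \<and> (\<forall>i. i \<noteq> j \<longrightarrow> 1 < s $ i \<and> s $ i < 2)"
  by (auto simp: dyadic_box_def mem_box_cart split: if_splits)

lemma emeasure_dyadic_box: "emeasure lborel (dyadic_box j k) = ennreal ((1/2)^Suc k)"
proof -
  have "(1/2::real)^Suc k \<le> (1/2)^k" by (simp add: power_decreasing)
  then have "emeasure lborel (dyadic_box j k) = ennreal (\<Prod>i\<in>UNIV.
      (if i = j then (1/2)^k else 2) - (if i = j then (1/2)^Suc k else 1))"
    unfolding dyadic_box_def by (subst emeasure_lborel_box_cart) auto
  also have "(\<Prod>i\<in>UNIV. (if i = j then (1/2)^k else 2) - (if i = j then (1/2)^Suc k else 1))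
      = (\<Prod>i\<in>UNIV. if i = j then (1/2::real)^Suc k else 1)"
    by (intro prod.cong) auto
  finally show ?thesis by simp
qed

lemma disjoint_family_dyadic_box: "disjoint_family (dyadic_box j)"
proof -
  have "dyadic_box j k \<inter> dyadic_box j m = {}" if "m < k" for k m
  proof -
    have "(1/2::real)^k \<le> (1/2)^Suc m" using that by (intro power_decreasing) auto
    then show ?thesis by (auto simp: mem_dyadic_box)
  qed
  then show ?thesis
    unfolding disjoint_family_on_def by (metis Int_commute nat_neq_iff)
qed

lemma dyadic_box_component_bounds:
  assumes "s \<in> dyadic_box j k"
  shows "0 < s $ i" "s $ i \<le> 2"
proof -
  have "0 < s $ i \<and> s $ i \<le> 2"
  proof (cases "i = j")
    case True
    have "(1/2::real)^k \<le> 1" "(0::real) < (1/2)^Suc k" by (simp_all add: power_le_one)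
    then show ?thesis using assms True by (simp add: mem_dyadic_box)
  next
    case False
    then show ?thesis using assms by (auto simp: mem_dyadic_box)
  qed
  then show "0 < s $ i" "s $ i \<le> 2" by simp_all
qed

lemma prod_inverse_abs_ge_on_dyadic_box:
  fixes s :: "real^'n"
  assumes "s \<in> dyadic_box j k"
  shows "2^k * (1/2)^CARD('n) \<le> (\<Prod>i\<in>UNIV. 1 / \<bar>s $ i\<bar>)"
proof -
  have "(if i = j then 2^k else 1) * (1/2::real) \<le> 1 / \<bar>s $ i\<bar>" for i
  proof (cases "i = j")
    case True
    have "0 < s $ j" by (rule dyadic_box_component_bounds[OF assms])
    moreover have "s $ j < 1 / 2^k" using assms by (simp add: mem_dyadic_box power_one_over)
    ultimately have "2^k < 1 / s $ j" by (simp add: field_simps)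
    moreover have "1 / s $ j \<le> 2 / s $ j" using \<open>0 < s $ j\<close> by (simp add: divide_right_mono)
    ultimately show ?thesis using True \<open>0 < s $ j\<close> by simp
  next
    case False
    have "0 < s $ i" "s $ i \<le> 2" by (rule dyadic_box_component_bounds[OF assms])+
    then have "1 / 2 \<le> 1 / s $ i" by (intro divide_left_mono) auto
    then show ?thesis using False \<open>0 < s $ i\<close> by simp
  qed
  then have "(\<Prod>i\<in>UNIV. (if i = j then 2^k else 1) * (1/2::real)) \<le> (\<Prod>i\<in>UNIV. 1 / \<bar>s $ i\<bar>)"
    by (intro prod_mono) simp
  then show ?thesis by (subst (asm) prod.distrib) simp
qed

lemma nn_integral_spn_integrand_eq_top:
  fixes \<Omega> \<Psi> :: "real^'n^'n" and j :: 'n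
  assumes "det \<Omega> > 0" "det \<Psi> > 0" and b: "\<And>i. i \<noteq> j \<Longrightarrow> b i \<in> {1..2}"
  shows "(\<integral>\<^sup>+ s. ennreal ((\<Prod>i\<in>UNIV. 1 / \<bar>s $ i\<bar>)
            * mvn_density \<Omega> (\<chi> i. (if i = j then 0 else b i) / s $ i)
            * mvn_density \<Psi> s) \<partial>lborel) = \<infinity>"
proof -
  define R where "R = CARD('n) * (2::real)"
  obtain c\<Omega> where c\<Omega>: "c\<Omega> > 0" "\<And>x. norm x \<le> R \<Longrightarrow> c\<Omega> \<le> mvn_density \<Omega> x"
    using mvn_density_bounded_below_on_ball[OF assms(1)] by blast
  obtain c\<Psi> where c\<Psi>: "c\<Psi> > 0" "\<And>x. norm x \<le> R \<Longrightarrow> c\<Psi> \<le> mvn_density \<Psi> x"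
    using mvn_density_bounded_below_on_ball[OF assms(2)] by blast
  define C where "C = (1/2)^CARD('n) * c\<Omega> * c\<Psi>"
  have "C > 0" using c\<Omega> c\<Psi> by (simp add: C_def)
  show ?thesis
  proof (rule nn_integral_eq_top_if_bounded_below_on_disjoint_family
      [OF disjoint_family_dyadic_box _ _ half_gt_zero[OF \<open>C > 0\<close>]])
    fix k s assume s: "s \<in> dyadic_box j k"
    have "\<bar>(if i = j then 0 else b i) / s $ i\<bar> \<le> 2" for i
      using b[of i] dyadic_box_component_bounds[OF s, of i] s
      by (auto simp: mem_dyadic_box field_simps)
    then have "norm (\<chi> i. (if i = j then 0 else b i) / s $ i) \<le> R"
      unfolding R_def by (intro norm_le_card_mult_if_components_le) simp
    then have \<Omega>_bound: "c\<Omega> \<le> mvn_density \<Omega> (\<chi> i. (if i = j then 0 else b i) / s $ i)"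
      by (rule c\<Omega>)
    have "norm s \<le> R"
      unfolding R_def using dyadic_box_component_bounds[OF s]
      by (intro norm_le_card_mult_if_components_le) (simp add: order_less_imp_le)
    then have \<Psi>_bound: "c\<Psi> \<le> mvn_density \<Psi> s" by (rule c\<Psi>)
    have partial_bound: "(2^k * (1/2)^CARD('n)) * c\<Omega> \<le> (\<Prod>i\<in>UNIV. 1 / \<bar>s $ i\<bar>)
        * mvn_density \<Omega> (\<chi> i. (if i = j then 0 else b i) / s $ i)"
      using prod_inverse_abs_ge_on_dyadic_box[OF s] \<Omega>_bound c\<Omega>(1)
      by (intro mult_mono) (simp_all add: prod_nonneg)
    have "(2^k * (1/2)^CARD('n)) * c\<Omega> * c\<Psi> \<le> (\<Prod>i\<in>UNIV. 1 / \<bar>s $ i\<bar>)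
        * mvn_density \<Omega> (\<chi> i. (if i = j then 0 else b i) / s $ i) * mvn_density \<Psi> s"
      by (rule mult_mono[OF partial_bound \<Psi>_bound])
        (use \<Omega>_bound c\<Psi>(1) c\<Omega>(1) in \<open>simp_all add: prod_nonneg\<close>)
    then show "ennreal (C * 2^k) \<le> ennreal ((\<Prod>i\<in>UNIV. 1 / \<bar>s $ i\<bar>)
        * mvn_density \<Omega> (\<chi> i. (if i = j then 0 else b i) / s $ i) * mvn_density \<Psi> s)"
      by (intro ennreal_leI) (simp add: C_def mult_ac)
  next
    fix k
    have "C / 2 = C * 2^k * (1/2)^Suc k" by (simp add: power_one_over field_simps)
    then show "ennreal (C / 2) \<le> ennreal (C * 2^k) * emeasure lborel (dyadic_box j k)"
      using \<open>C > 0\<close> by (simp add: emeasure_dyadic_box ennreal_mult'[symmetric])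
  qed (simp add: dyadic_box_def)
qed

theorem proposition2p3:
  fixes \<Omega> \<Psi> :: "real^'n^'n" and j :: 'n
  assumes "pos_def_mat \<Omega>" and "pos_def_mat \<Psi>"
    and "\<forall>i. \<Psi> $ i $ i = 1"
    and "\<exists>i k. i \<noteq> k \<and> \<Psi> $ i $ k \<noteq> 0"
  shows "(\<integral>\<^sup>+ b. (\<integral>\<^sup>+ s. ennreal ((\<Prod>i\<in>UNIV. 1 / \<bar>s $ i\<bar>)
              * mvn_density \<Omega> (\<chi> i. (if i = j then 0 else b i) / s $ i)
              * mvn_density \<Psi> s) \<partial>lborel)
           \<partial>(PiM (UNIV - {j}) (\<lambda>_. lborel))) = \<infinity>"
proof (rule nn_integral_eq_top_if_top_on_set)
  let ?cube = "PiE (UNIV - {j}) (\<lambda>_. {1..2::real})"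
  interpret product_sigma_finite "\<lambda>_::'n. lborel :: real measure"
    by (simp add: product_sigma_finite_def lborel.sigma_finite_measure_axioms)
  show "?cube \<in> sets (PiM (UNIV - {j}) (\<lambda>_. lborel))"
    by (intro sets_PiM_I_finite) auto
  show "emeasure (PiM (UNIV - {j}) (\<lambda>_. lborel)) ?cube \<noteq> 0"
    by (subst emeasure_PiM) auto
  show "(\<integral>\<^sup>+ s. ennreal ((\<Prod>i\<in>UNIV. 1 / \<bar>s $ i\<bar>)
          * mvn_density \<Omega> (\<chi> i. (if i = j then 0 else b i) / s $ i)
          * mvn_density \<Psi> s) \<partial>lborel) = \<infinity>" if "b \<in> ?cube" for b
  proof (rule nn_integral_spn_integrand_eq_top)
    show "det \<Omega> > 0" "det \<Psi> > 0" using assms(1,2) by (simp_all add: pos_def_mat_det_pos)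
    show "b i \<in> {1..2}" if "i \<noteq> j" for i using PiE_mem[OF \<open>b \<in> ?cube\<close>] that by simp
  qed
qed

end
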